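(* Let $Q\ge2$ be an integer, let $i$ be any integer, and let $k\ge3$. Then \[ \begin{pmatrix}\nu_{k-1}(\gamma_i)&\nu_k(\gamma_i)\\ \nu_{k-2}(\gamma_{i+1})&\nu_{k-1}(\gamma_{i+1})\end{pmatrix}\in SL_2(\mathbb{Z}), \] i.e. $\nu_{k-1}(\gamma_i)\nu_{k-1}(\gamma_{i+1})-\nu_k(\gamma_i)\nu_{k-2}(\gamma_{i+1})=1$.
   Context: For $Q\in\mathbb{N}$, the Farey fractions of order $Q$ are $\mathcal{F}_Q=\{a/q\in\mathbb{Q}: 1\le q\le Q,\ 0<a\le q,\ \gcd(a,q)=1\}$. Write $\mathcal{F}_Q=\{\gamma_1,\ldots,\gamma_{N(Q)}\}$ with $1/Q=\gamma_1<\cdots<\gamma_{N(Q)}=1$, and extend to all $i\in\mathbb{Z}$ by $\gamma_{i+N(Q)}=\gamma_i+1$. Write $\gamma_i=p_i/q_i$ in lowest terms with $q_i>0$. For a positive integer $k$, $\nu_k(\gamma_i)=p_{i+k-1}q_{i-1}-p_{i-1}q_{i+k-1}$ (so $\nu_1\equiv1$). *)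

theory Defs
  imports Complex_Main
begin

definition farey :: "nat \<Rightarrow> rat set" where
  "farey Q = {r. \<exists>a q::int. 1 \<le> q \<and> q \<le> int Q \<and> 0 < a \<and> a \<le> q \<and> coprime a q
                 \<and> r = of_int a / of_int q}"

definition farey_N :: "nat \<Rightarrow> nat" where
  "farey_N Q = card (farey Q)"

text \<open>gamma Q i for i in 1..N is the i-th smallest Farey fraction (gamma Q 1 = 1/Q,
  gamma Q N = 1); extended to all integers by gamma (i + N) = gamma i + 1.\<close>
definition farey_gamma :: "nat \<Rightarrow> int \<Rightarrow> rat" where
  "farey_gamma Q i =
     sorted_list_of_set (farey Q) ! nat ((i - 1) mod int (farey_N Q))
     + of_int ((i - 1) div int (farey_N Q))"

definition farey_p :: "nat \<Rightarrow> int \<Rightarrow> int" where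
  "farey_p Q i = fst (quotient_of (farey_gamma Q i))"

definition farey_q :: "nat \<Rightarrow> int \<Rightarrow> int" where
  "farey_q Q i = snd (quotient_of (farey_gamma Q i))"

definition farey_nu :: "nat \<Rightarrow> nat \<Rightarrow> int \<Rightarrow> int" where
  "farey_nu Q k i = farey_p Q (i + int k - 1) * farey_q Q (i - 1)
                    - farey_p Q (i - 1) * farey_q Q (i + int k - 1)"

end

theory Submission imports Defs begin

text \<open>If \<open>a/b < x/y\<close> with \<open>xb - ay = 1\<close>, every fraction strictly between them has
  denominator at least \<open>b + y\<close>. Bezout provides, for each \<open>a/b\<close> in \<open>F\<^sub>Q\<close> below 1, such an
  \<open>x/y\<close> with \<open>Q - b < y \<le> Q\<close>; so \<open>x/y\<close> is the successor of \<open>a/b\<close>, and consecutive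
  Farey fractions have determinant \<open>p\<^sub>i\<^sub>+\<^sub>1 q\<^sub>i - p\<^sub>i q\<^sub>i\<^sub>+\<^sub>1 = 1\<close>. Translation by an integer
  preserves determinants, and the wrap from \<open>1\<close> to \<open>1 + 1/Q\<close> has determinant 1 as well.
  Now \<open>\<nu>\<^sub>k(\<gamma>\<^sub>i)\<close> is the determinant of the vectors \<open>(p, q)\<close> of \<open>\<gamma>\<^sub>i\<^sub>-\<^sub>1\<close> and
  \<open>\<gamma>\<^sub>i\<^sub>+\<^sub>k\<^sub>-\<^sub>1\<close>, and the Pluecker relation for four plane vectors turns the claimed
  determinant into the product of the determinants of the consecutive pairs
  \<open>(\<gamma>\<^sub>i\<^sub>-\<^sub>1, \<gamma>\<^sub>i)\<close> and \<open>(\<gamma>\<^sub>i\<^sub>+\<^sub>k\<^sub>-\<^sub>2, \<gamma>\<^sub>i\<^sub>+\<^sub>k\<^sub>-\<^sub>1)\<close>.\<close>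

lemma quotient_of_of_int_divide:
  assumes "b > 0" "coprime a b"
  shows "quotient_of (of_int a / of_int b) = (a, b)"
  using assms by (simp add: Fract_of_int_quotient[symmetric] quotient_of_Fract)

lemma quotient_of_add_of_int:
  "quotient_of (r + of_int c) = (fst (quotient_of r) + c * snd (quotient_of r), snd (quotient_of r))"
proof -
  obtain a b where ab: "quotient_of r = (a, b)" by (cases "quotient_of r")
  have b: "b > 0" using quotient_of_denom_pos[OF ab] .
  have "coprime (a + c * b) b"
    using quotient_of_coprime[OF ab]
    by (simp add: coprime_iff_gcd_eq_1 gcd.commute[of _ b] gcd_add_mult add.commute[of a])
  then have "quotient_of (of_int (a + c * b) / of_int b) = (a + c * b, b)"
    by (rule quotient_of_of_int_divide[OF b])
  moreover have "r + of_int c = of_int (a + c * b) / of_int b"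
    using b by (simp add: quotient_of_div[OF ab] field_simps)
  ultimately show ?thesis using ab by simp
qed

lemma quotient_of_one_divide_of_nat: "n \<ge> 1 \<Longrightarrow> quotient_of (1 / of_nat n) = (1, int n)"
  using quotient_of_of_int_divide[of "int n" 1] by simp

lemma of_int_divide_less_iff:
  assumes "b > 0" "d > 0"
  shows "(of_int a / of_int b :: 'a::linordered_field) < of_int c / of_int d \<longleftrightarrow> a * d < c * b"
proof -
  have "(of_int a / of_int b :: 'a) < of_int c / of_int d \<longleftrightarrow> of_int a * of_int d < (of_int c * of_int b :: 'a)"
    using assms by (simp add: field_simps)
  also have "\<dots> \<longleftrightarrow> a * d < c * b" by (simp flip: of_int_mult)
  finally show ?thesis .
qed

lemma denom_ge_between_unimodular:
  fixes a b x y r s :: int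
  assumes det: "x * b - a * y = 1" and "b > 0" "y > 0"
    and between: "a * s < r * b" "r * y < x * s"
  shows "b + y \<le> s"
proof -
  have "s = s * (x * b - a * y)" using det by simp
  also have "\<dots> = y * (r * b - a * s) + b * (x * s - r * y)" by (simp add: algebra_simps)
  finally have "s = y * (r * b - a * s) + b * (x * s - r * y)" .
  moreover have "y \<le> y * (r * b - a * s)" "b \<le> b * (x * s - r * y)"
    using assms by simp_all
  ultimately show ?thesis by linarith
qed

lemma unimodular_partner:
  fixes a b Q :: int
  assumes "coprime a b" "0 \<le> a" "a < b" "b \<le> Q"
  obtains x y where "x * b - a * y = 1" "Q - b < y" "y \<le> Q" "0 < x" "x \<le> y"
proof -
  have b: "b > 0" using assms by simp
  obtain s t where "s * a + t * b = 1"
    using bezout_int[of a b] assms(1) by auto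
  define m where "m = (Q + s) div b"
  define y where "y = m * b - s"
  define x where "x = t + m * a"
  have det: "x * b - a * y = 1"
    unfolding x_def y_def using \<open>s * a + t * b = 1\<close> by (simp add: algebra_simps)
  have "y = Q - (Q + s) mod b"
    unfolding y_def m_def using div_mult_mod_eq[of "Q + s" b] by linarith
  then have y: "Q - b < y" "y \<le> Q"
    using pos_mod_sign[OF b] pos_mod_bound[OF b] by auto
  have "0 \<le> a * y" using assms y by simp
  then have "0 < x * b" using det by linarith
  then have "0 < x" using b by (rule zero_less_mult_pos2)
  moreover have "x * b \<le> y * b"
  proof -
    have "a * y \<le> (b - 1) * y" using assms y by (intro mult_right_mono) auto
    then show ?thesis using det y assms by (simp add: algebra_simps)
  qed
  then have "x \<le> y" using b by (rule mult_right_le_imp_le)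
  ultimately show thesis using that det y by blast
qed

lemma sorted_list_of_set_nth_0:
  assumes "finite A" "A \<noteq> {}"
  shows "sorted_list_of_set A ! 0 = Min A"
  using assms by (simp add: sorted_list_of_set_nonempty)

lemma sorted_list_of_set_nth_last:
  assumes "finite A" "A \<noteq> {}"
  shows "sorted_list_of_set A ! (card A - 1) = Max A"
proof -
  let ?L = "sorted_list_of_set A"
  have len: "length ?L = card A" "card A > 0"
    using assms by (auto simp: card_gt_0_iff)
  show ?thesis
  proof (rule Max_eqI[symmetric])
    show "?L ! (card A - 1) \<in> A" using assms len by (metis diff_less nth_mem set_sorted_list_of_set zero_less_one)
    fix w assume "w \<in> A"
    then obtain j where "j < length ?L" "w = ?L ! j"
      using assms by (metis in_set_conv_nth set_sorted_list_of_set)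
    then show "w \<le> ?L ! (card A - 1)"
      using len by (simp add: sorted_nth_mono)
  qed (use assms in simp)
qed

lemma sorted_list_of_set_nth_Suc_adjacent:
  assumes "finite A" "Suc m < card A"
  defines "L \<equiv> sorted_list_of_set A"
  shows "L ! m < L ! Suc m" and "\<forall>w\<in>A. \<not> (L ! m < w \<and> w < L ! Suc m)"
proof -
  have L: "sorted_wrt (<) L" "length L = card A" "set L = A"
    using assms by (simp_all add: L_def)
  then show "L ! m < L ! Suc m" using assms(2) by (simp add: sorted_wrt_nth_less)
  show "\<forall>w\<in>A. \<not> (L ! m < w \<and> w < L ! Suc m)"
  proof (intro ballI notI)
    fix w assume "w \<in> A" "L ! m < w \<and> w < L ! Suc m"
    moreover obtain j where j: "j < length L" "w = L ! j"
      using \<open>w \<in> A\<close> L(3) by (metis in_set_conv_nth)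
    moreover have "L ! j \<le> L ! m \<or> L ! Suc m \<le> L ! j"
      using strict_sorted_imp_sorted[OF L(1)] j(1) assms(2) L(2)
      by (cases "j \<le> m") (auto simp: sorted_nth_mono)
    ultimately show False by auto
  qed
qed

definition frac_det :: "rat \<Rightarrow> rat \<Rightarrow> int" where
  "frac_det u v = fst (quotient_of v) * snd (quotient_of u) - fst (quotient_of u) * snd (quotient_of v)"

lemma frac_det_plucker:
  "frac_det u0 u2 * frac_det u1 u3 - frac_det u0 u3 * frac_det u1 u2
     = frac_det u0 u1 * frac_det u2 u3"
  unfolding frac_det_def by (simp add: algebra_simps)

lemma frac_det_add_of_int: "frac_det (u + of_int c) (v + of_int c) = frac_det u v"
  unfolding frac_det_def quotient_of_add_of_int by (simp add: algebra_simps)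

lemma farey_iff: "r \<in> farey Q \<longleftrightarrow> 0 < r \<and> r \<le> 1 \<and> snd (quotient_of r) \<le> int Q"
proof
  assume "r \<in> farey Q"
  then obtain a q :: int where
    h: "1 \<le> q" "q \<le> int Q" "0 < a" "a \<le> q" "coprime a q" "r = of_int a / of_int q"
    unfolding farey_def by blast
  then have "quotient_of r = (a, q)" by (simp add: quotient_of_of_int_divide)
  with h show "0 < r \<and> r \<le> 1 \<and> snd (quotient_of r) \<le> int Q" by simp
next
  assume h: "0 < r \<and> r \<le> 1 \<and> snd (quotient_of r) \<le> int Q"
  obtain a b where ab: "quotient_of r = (a, b)" by (cases "quotient_of r")
  have b: "b > 0" and r: "r = of_int a / of_int b"
    using quotient_of_denom_pos[OF ab] quotient_of_div[OF ab] .
  have "0 < a" "a \<le> b" using h b by (simp_all add: r zero_less_divide_iff)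
  then show "r \<in> farey Q" unfolding farey_def using b h ab r quotient_of_coprime[OF ab]
    by (intro CollectI exI[of _ a] exI[of _ b]) auto
qed

lemma finite_farey: "finite (farey Q)"
proof (rule finite_subset)
  show "farey Q \<subseteq> (\<lambda>(a, q). of_int a / of_int q) ` ({0..int Q} \<times> {0..int Q})"
    unfolding farey_def by (auto simp: image_iff)
qed auto

lemma farey_right_neighbour:
  assumes "u \<in> farey Q" "u < 1" and ab: "quotient_of u = (a, b)"
  obtains x y where "of_int x / of_int y \<in> farey Q" "u < of_int x / of_int y"
    "quotient_of (of_int x / of_int y) = (x, y)" "x * b - a * y = 1" "int Q < b + y"
proof -
  have b: "b > 0" and u: "u = of_int a / of_int b"
    using quotient_of_denom_pos[OF ab] quotient_of_div[OF ab] .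
  have "0 < a" "a < b" "b \<le> int Q"
    using assms b by (auto simp: farey_iff u zero_less_divide_iff)
  then obtain x y where xy: "x * b - a * y = 1" "int Q - b < y" "y \<le> int Q" "0 < x" "x \<le> y"
    using unimodular_partner[OF quotient_of_coprime[OF ab] less_imp_le] by blast
  have "coprime x y"
  proof (rule coprimeI)
    fix d assume "d dvd x" "d dvd y"
    then have "d dvd x * b - a * y" by simp
    then show "is_unit d" using xy(1) by simp
  qed
  then have q: "quotient_of (of_int x / of_int y) = (x, y)"
    using xy by (simp add: quotient_of_of_int_divide)
  have "u < of_int x / of_int y"
    unfolding u using xy b by (simp add: of_int_divide_less_iff)
  moreover have "of_int x / of_int y \<in> farey Q"
    using q xy by (simp add: farey_iff)
  ultimately show thesis using that q xy by simp
qed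

lemma farey_adjacent_frac_det:
  assumes "u \<in> farey Q" "v \<in> farey Q" "u < v"
    and adjacent: "\<forall>w\<in>farey Q. \<not> (u < w \<and> w < v)"
  shows "frac_det u v = 1"
proof -
  obtain a b where ab: "quotient_of u = (a, b)" by (cases "quotient_of u")
  obtain r s where rs: "quotient_of v = (r, s)" by (cases "quotient_of v")
  have "u < 1" using assms by (auto simp: farey_iff)
  then obtain x y where xy: "of_int x / of_int y \<in> farey Q" "u < of_int x / of_int y"
    "quotient_of (of_int x / of_int y) = (x, y)" "x * b - a * y = 1" "int Q < b + y"
    using farey_right_neighbour[OF assms(1) _ ab] by blast
  have b: "b > 0" and s: "s > 0" and y: "y > 0"
    using quotient_of_denom_pos ab rs xy(3) by blast+
  have "\<not> v < of_int x / of_int y"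
  proof
    assume "v < of_int x / of_int y"
    then have "a * s < r * b" "r * y < x * s"
      using \<open>u < v\<close> b s y
      by (simp_all add: quotient_of_div[OF ab] quotient_of_div[OF rs] of_int_divide_less_iff)
    then have "b + y \<le> s" using denom_ge_between_unimodular xy(4) b y by blast
    moreover have "s \<le> int Q" using assms(2) rs by (simp add: farey_iff)
    ultimately show False using xy(5) by simp
  qed
  moreover have "\<not> of_int x / of_int y < v" using adjacent xy(1,2) by blast
  ultimately have "quotient_of v = (x, y)" using xy(3) by fastforce
  then show ?thesis using ab xy(4) by (simp add: frac_det_def mult.commute)
qed

lemma farey_nonempty: "Q \<ge> 1 \<Longrightarrow> farey Q \<noteq> {}"
  using farey_iff[of 1 Q] by auto

lemma Min_farey: "Q \<ge> 1 \<Longrightarrow> Min (farey Q) = 1 / of_nat Q"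
proof (rule Min_eqI[OF finite_farey])
  assume Q: "Q \<ge> 1"
  then show "1 / of_nat Q \<in> farey Q" by (simp add: farey_iff quotient_of_one_divide_of_nat)
  fix w assume "w \<in> farey Q"
  then obtain r s where rs: "quotient_of w = (r, s)" "0 < w" "s \<le> int Q"
    by (metis farey_iff prod.collapse snd_conv)
  have s: "0 < s" and w: "w = of_int r / of_int s"
    using quotient_of_denom_pos[OF rs(1)] quotient_of_div[OF rs(1)] .
  have "0 < r" using rs(2) s w by (simp add: zero_less_divide_iff)
  have "1 * int Q \<le> r * int Q" using \<open>0 < r\<close> by (intro mult_right_mono) auto
  then have "s \<le> r * int Q" using rs(3) by simp
  then have "\<not> of_int r / of_int s < (of_int 1 / of_int (int Q) :: rat)"
    using s Q of_int_divide_less_iff[where 'a = rat, of s "int Q" r 1] by simp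
  then show "1 / of_nat Q \<le> w" using w by simp
qed

lemma Max_farey: "Q \<ge> 1 \<Longrightarrow> Max (farey Q) = 1"
  by (rule Max_eqI[OF finite_farey]) (auto simp: farey_iff)

lemma farey_gamma_block:
  assumes "0 \<le> m" "m < int (farey_N Q)"
  shows "farey_gamma Q (c * int (farey_N Q) + m + 1) = sorted_list_of_set (farey Q) ! nat m + of_int c"
proof -
  have "(c * int (farey_N Q) + m + 1 - 1) mod int (farey_N Q) = m"
       "(c * int (farey_N Q) + m + 1 - 1) div int (farey_N Q) = c"
    using assms by (simp_all add: add.commute[of "c * _"])
  then show ?thesis by (simp add: farey_gamma_def)
qed

lemma farey_nu_eq_frac_det:
  "farey_nu Q k i = frac_det (farey_gamma Q (i - 1)) (farey_gamma Q (i + int k - 1))"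
  unfolding farey_nu_def frac_det_def farey_p_def farey_q_def ..

lemma farey_gamma_frac_det_Suc:
  assumes Q: "Q \<ge> 1"
  shows "frac_det (farey_gamma Q j) (farey_gamma Q (j + 1)) = 1"
proof -
  let ?F = "farey Q" and ?N = "int (farey_N Q)"
  let ?L = "sorted_list_of_set ?F"
  have N: "farey_N Q = card ?F" "card ?F > 0"
    using finite_farey farey_nonempty[OF Q] by (auto simp: farey_N_def card_gt_0_iff)
  define m where "m = (j - 1) mod ?N"
  define c where "c = (j - 1) div ?N"
  have m: "0 \<le> m" "m < ?N" using N by (simp_all add: m_def)
  have j: "j = c * ?N + m + 1" unfolding m_def c_def by simp
  show ?thesis
  proof (cases "m + 1 < ?N")
    case True
    have "nat (m + 1) = Suc (nat m)" using m by simp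
    then have "farey_gamma Q (j + 1) = ?L ! Suc (nat m) + of_int c"
      using farey_gamma_block[of "m + 1" Q c] True m by (simp add: j add.assoc)
    moreover have "farey_gamma Q j = ?L ! nat m + of_int c"
      using farey_gamma_block[of m Q c] m by (simp add: j)
    moreover have "frac_det (?L ! nat m) (?L ! Suc (nat m)) = 1"
    proof (rule farey_adjacent_frac_det)
      have "Suc (nat m) < length ?L" using True m N finite_farey by simp
      then show "?L ! nat m \<in> ?F" "?L ! Suc (nat m) \<in> ?F"
        using finite_farey by (metis Suc_lessD nth_mem set_sorted_list_of_set)+
      show "?L ! nat m < ?L ! Suc (nat m)" "\<forall>w\<in>?F. \<not> (?L ! nat m < w \<and> w < ?L ! Suc (nat m))"
        using sorted_list_of_set_nth_Suc_adjacent[OF finite_farey, of "nat m" Q] True m N by simp_all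
    qed
    ultimately show ?thesis by (simp add: frac_det_add_of_int)
  next
    case False
    then have m_last: "nat m = card ?F - 1" using m N by linarith
    have "farey_gamma Q j = 1 + of_int c"
      using farey_gamma_block[of m Q c] m m_last sorted_list_of_set_nth_last[OF finite_farey farey_nonempty[OF Q]]
      by (simp add: j Max_farey[OF Q])
    moreover have "j + 1 = (c + 1) * ?N + 0 + 1" using False m by (simp add: j algebra_simps)
    then have "farey_gamma Q (j + 1) = (1 / of_nat Q + of_int 1) + of_int c"
      using farey_gamma_block[of 0 Q "c + 1"] N
        sorted_list_of_set_nth_0[OF finite_farey farey_nonempty[OF Q]]
      by (simp add: Min_farey[OF Q] algebra_simps)
    moreover have "frac_det 1 (1 / of_nat Q + of_int 1) = 1"
      using Q quotient_of_add_of_int[of "1 / of_nat Q" 1]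
      by (simp add: frac_det_def quotient_of_one_divide_of_nat)
    ultimately show ?thesis by (metis frac_det_add_of_int)
  qed
qed

theorem lemma1:
  fixes Q k :: nat and i :: int
  assumes "Q \<ge> 2" and "k \<ge> 3"
  shows "farey_nu Q (k - 1) i * farey_nu Q (k - 1) (i + 1)
           - farey_nu Q k i * farey_nu Q (k - 2) (i + 1) = 1"
proof -
  let ?\<gamma> = "farey_gamma Q"
  have "int (k - 1) = int k - 1" "int (k - 2) = int k - 2" using assms(2) by auto
  then have "farey_nu Q (k - 1) i * farey_nu Q (k - 1) (i + 1)
               - farey_nu Q k i * farey_nu Q (k - 2) (i + 1)
           = frac_det (?\<gamma> (i - 1)) (?\<gamma> (i + int k - 2)) * frac_det (?\<gamma> i) (?\<gamma> (i + int k - 1))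
               - frac_det (?\<gamma> (i - 1)) (?\<gamma> (i + int k - 1)) * frac_det (?\<gamma> i) (?\<gamma> (i + int k - 2))"
    by (simp add: farey_nu_eq_frac_det algebra_simps)
  also have "\<dots> = frac_det (?\<gamma> (i - 1)) (?\<gamma> i) * frac_det (?\<gamma> (i + int k - 2)) (?\<gamma> (i + int k - 1))"
    by (rule frac_det_plucker)
  also have "\<dots> = 1"
    using farey_gamma_frac_det_Suc[of Q "i - 1"] farey_gamma_frac_det_Suc[of Q "i + int k - 2"] assms(1)
    by (simp add: algebra_simps)
  finally show ?thesis .
qed

end
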